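(* There exists a function $f(n,w)$ such that for all positive integers $n,w$ the following holds. If $G$ is a connected graph and $(T,\mathcal{Y})$ is a lean tree-decomposition of $G$ of width at most $w$ such that $T$ contains a path $P$ of length at least $f(n,w)$, then $P$ has interior vertices $t_1,t_2,\ldots,t_n$, occurring along $P$ in this order, such that: (i) for some positive integer $s\leq w+1$, $|Y_{t_i}|=s$ for all $i\in[n]$, and $|Y_t|\geq s$ for every vertex $t$ of $P$ between $t_1$ and $t_n$; and (ii) there is a set $U\subseteq V(G)$ with $Y_{t_i}\cap Y_{t_j}=U$ for all distinct $i,j\in[n]$.
   Context: All graphs are finite and loopless but may have parallel edges; $[n]=\{1,\dots,n\}$. A tree-decomposition of $G$ is a pair $(T,\mathcal{Y})$ where $T$ is a tree and $\mathcal{Y}=\{Y_t\}_{t\in V(T)}$ is a family of subsets of $V(G)$ (bags) such that (W1) $\bigcup_{t} Y_t=V(G)$ and every edge of $G$ has both ends in some $Y_t$; and (W2) if $t'$ lies on the path of $T$ between $t$ and $t''$ then $Y_t\cap Y_{t''}\subseteq Y_{t'}$. Its width is $\max_t(|Y_t|-1)$. It is lean if additionally: (W3) for every two vertices $t,t'$ of $T$ and every positive integer $k$, either $G$ has $k$ vertex-disjoint paths between $Y_t$ and $Y_{t'}$, or some vertex $t''$ on the path of $T$ between $t$ and $t'$ has $|Y_{t''}|<k$; (W4) distinct vertices $t\ne t'$ of $T$ have $Y_t\neq Y_{t'}$; (W5) if $t_0\in V(T)$ and $B$ is a component of $T-t_0$, then $\bigcup_{t\in V(B)}Y_t\setminus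 Y_{t_0}\neq\emptyset$. *)

theory Defs
  imports Main
begin

text \<open>Finite loopless multigraphs: vertex set V, edge set E, and an endpoint map
  ends assigning to each edge its two (distinct) ends.\<close>
definition multigraph :: "'v set \<Rightarrow> 'e set \<Rightarrow> ('e \<Rightarrow> 'v set) \<Rightarrow> bool" where
  "multigraph V E ends \<longleftrightarrow> finite V \<and> finite E \<and>
     (\<forall>e\<in>E. ends e \<subseteq> V \<and> card (ends e) = 2)"

definition mg_adj :: "'e set \<Rightarrow> ('e \<Rightarrow> 'v set) \<Rightarrow> 'v \<Rightarrow> 'v \<Rightarrow> bool" where
  "mg_adj E ends u v \<longleftrightarrow> (\<exists>e\<in>E. ends e = {u, v})"

definition is_path :: "('a \<Rightarrow> 'a \<Rightarrow> bool) \<Rightarrow> 'a set \<Rightarrow> 'a list \<Rightarrow> bool" where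
  "is_path R S xs \<longleftrightarrow> xs \<noteq> [] \<and> distinct xs \<and> set xs \<subseteq> S \<and>
     (\<forall>i. Suc i < length xs \<longrightarrow> R (xs ! i) (xs ! Suc i))"

definition connected_on :: "('a \<Rightarrow> 'a \<Rightarrow> bool) \<Rightarrow> 'a set \<Rightarrow> bool" where
  "connected_on R S \<longleftrightarrow>
     (\<forall>u\<in>S. \<forall>v\<in>S. \<exists>xs. is_path R S xs \<and> hd xs = u \<and> last xs = v)"

definition simple_graph :: "'a set \<Rightarrow> ('a \<Rightarrow> 'a \<Rightarrow> bool) \<Rightarrow> bool" where
  "simple_graph VT ET \<longleftrightarrow> finite VT \<and>
     (\<forall>x y. ET x y \<longrightarrow> x \<in> VT \<and> y \<in> VT \<and> x \<noteq> y \<and> ET y x)"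

definition is_cycle :: "'a set \<Rightarrow> ('a \<Rightarrow> 'a \<Rightarrow> bool) \<Rightarrow> 'a list \<Rightarrow> bool" where
  "is_cycle VT ET xs \<longleftrightarrow> is_path ET VT xs \<and> 3 \<le> length xs \<and> ET (last xs) (hd xs)"

definition is_tree :: "'a set \<Rightarrow> ('a \<Rightarrow> 'a \<Rightarrow> bool) \<Rightarrow> bool" where
  "is_tree VT ET \<longleftrightarrow> simple_graph VT ET \<and> VT \<noteq> {} \<and> connected_on ET VT \<and>
     \<not> (\<exists>xs. is_cycle VT ET xs)"

definition on_tpath :: "'a set \<Rightarrow> ('a \<Rightarrow> 'a \<Rightarrow> bool) \<Rightarrow> 'a \<Rightarrow> 'a \<Rightarrow> 'a \<Rightarrow> bool" where
  "on_tpath VT ET t t' x \<longleftrightarrow>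
     (\<exists>xs. is_path ET VT xs \<and> hd xs = t \<and> last xs = t' \<and> x \<in> set xs)"

definition tree_decomp ::
  "'v set \<Rightarrow> 'e set \<Rightarrow> ('e \<Rightarrow> 'v set) \<Rightarrow> 't set \<Rightarrow> ('t \<Rightarrow> 't \<Rightarrow> bool) \<Rightarrow> ('t \<Rightarrow> 'v set) \<Rightarrow> bool" where
  "tree_decomp V E ends VT ET Y \<longleftrightarrow> is_tree VT ET \<and>
     (\<forall>t\<in>VT. Y t \<subseteq> V) \<and>
     (\<Union>t\<in>VT. Y t) = V \<and>
     (\<forall>e\<in>E. \<exists>t\<in>VT. ends e \<subseteq> Y t) \<and>
     (\<forall>t t' t''. t \<in> VT \<longrightarrow> t'' \<in> VT \<longrightarrow> on_tpath VT ET t t'' t' \<longrightarrow> Y t \<inter> Y t'' \<subseteq> Y t')"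

definition has_disj_paths :: "('a \<Rightarrow> 'a \<Rightarrow> bool) \<Rightarrow> 'a set \<Rightarrow> 'a set \<Rightarrow> 'a set \<Rightarrow> nat \<Rightarrow> bool" where
  "has_disj_paths R S A B k \<longleftrightarrow> (\<exists>p :: nat \<Rightarrow> 'a list.
     (\<forall>i<k. is_path R S (p i) \<and> hd (p i) \<in> A \<and> last (p i) \<in> B) \<and>
     (\<forall>i<k. \<forall>j<k. i \<noteq> j \<longrightarrow> set (p i) \<inter> set (p j) = {}))"

definition components_minus :: "'a set \<Rightarrow> ('a \<Rightarrow> 'a \<Rightarrow> bool) \<Rightarrow> 'a \<Rightarrow> 'a set set" where
  "components_minus VT ET t0 = {C. \<exists>x\<in>VT - {t0}.
     C = {y. \<exists>xs. is_path ET (VT - {t0}) xs \<and> hd xs = x \<and> last xs = y}}"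

definition lean_tree_decomp ::
  "'v set \<Rightarrow> 'e set \<Rightarrow> ('e \<Rightarrow> 'v set) \<Rightarrow> 't set \<Rightarrow> ('t \<Rightarrow> 't \<Rightarrow> bool) \<Rightarrow> ('t \<Rightarrow> 'v set) \<Rightarrow> bool" where
  "lean_tree_decomp V E ends VT ET Y \<longleftrightarrow> tree_decomp V E ends VT ET Y \<and>
     (\<forall>t\<in>VT. \<forall>t'\<in>VT. \<forall>k::nat. 0 < k \<longrightarrow>
        has_disj_paths (mg_adj E ends) V (Y t) (Y t') k \<or>
        (\<exists>t''. on_tpath VT ET t t' t'' \<and> card (Y t'') < k)) \<and>
     (\<forall>t\<in>VT. \<forall>t'\<in>VT. t \<noteq> t' \<longrightarrow> Y t \<noteq> Y t') \<and>
     (\<forall>t0\<in>VT. \<forall>B\<in>components_minus VT ET t0. (\<Union>t\<in>B. Y t) - Y t0 \<noteq> {})"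

end

theory Submission
  imports Defs
begin

text \<open>The bag sizes along the interior of \<open>P\<close> take at most \<open>w + 2\<close> values. In a sequence of
  length \<open>N ^ (w + 2)\<close> over \<open>w + 2\<close> values some value \<open>s\<close> is attained \<open>N\<close> times with no smaller
  value in between: either the minimum is attained \<open>N\<close> times, or one of \<open>N\<close> consecutive blocks of
  length \<open>N ^ (w + 1)\<close> avoids it and we recurse into that block. Leanness (in fact only (W4)) makes
  the bags of distinct nodes of \<open>P\<close> distinct, so these are \<open>N\<close> distinct sets of size \<open>s \<le> w + 1\<close>,
  and the Erd\H{o}s--Rado sunflower lemma extracts \<open>n\<close> of them with a common pairwise
  intersection.\<close>

definition sunflower :: "('i \<Rightarrow> 'a set) \<Rightarrow> 'i set \<Rightarrow> 'a set \<Rightarrow> bool" where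
  "sunflower g J U \<longleftrightarrow> (\<forall>i\<in>J. \<forall>j\<in>J. i \<noteq> j \<longrightarrow> g i \<inter> g j = U)"

lemma sunflower_subset: "sunflower g J U \<Longrightarrow> J' \<subseteq> J \<Longrightarrow> sunflower g J' U"
  unfolding sunflower_def by blast

lemma card_empty_members_le_1:
  assumes "finite I" "inj_on g I"
  shows "card {i\<in>I. g i = {}} \<le> 1"
  using assms by (auto simp: card_le_Suc0_iff_eq inj_on_def)

lemma maximal_disjoint_subfamily:
  assumes "finite I"
  obtains M where "M \<subseteq> I" "sunflower g M {}" "\<forall>i\<in>I. g i \<noteq> {} \<longrightarrow> g i \<inter> \<Union>(g ` M) \<noteq> {}"
proof -
  let ?C = "{M. M \<subseteq> I \<and> sunflower g M {}}"
  have "finite ?C" using assms by simp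
  moreover have "{} \<in> ?C" by (simp add: sunflower_def)
  ultimately obtain M where M: "M \<in> ?C" and max: "\<forall>M'\<in>?C. M \<subseteq> M' \<longrightarrow> M = M'"
    using finite_has_maximal[of ?C] by blast
  have "g i \<inter> \<Union>(g ` M) \<noteq> {}" if "i \<in> I" "g i \<noteq> {}" for i
  proof (cases "i \<in> M")
    case False
    show ?thesis
    proof
      assume "g i \<inter> \<Union>(g ` M) = {}"
      then have "insert i M \<in> ?C" using M \<open>i \<in> I\<close> by (auto simp: sunflower_def)
      then show False using max False by blast
    qed
  qed (use that in auto)
  with M that show ?thesis by blast
qed

lemma element_in_many_members:
  assumes "finite I" "inj_on g I" "\<forall>i\<in>I. finite (g i) \<and> card (g i) \<le> s"
    and no_disjoint: "\<forall>M\<subseteq>I. sunflower g M {} \<longrightarrow> card M < k"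
    and big: "1 + k * s * b < card I"
  shows "\<exists>x. b < card {i\<in>I. x \<in> g i}"
proof (rule ccontr)
  assume "\<not> ?thesis"
  then have few: "\<forall>x. card {i\<in>I. x \<in> g i} \<le> b" by (simp add: not_less)
  obtain M where M: "M \<subseteq> I" "sunflower g M {}"
    and hits: "\<forall>i\<in>I. g i \<noteq> {} \<longrightarrow> g i \<inter> \<Union>(g ` M) \<noteq> {}"
    using maximal_disjoint_subfamily[OF \<open>finite I\<close>] by blast
  define D where "D = \<Union>(g ` M)"
  have finM: "finite M" using M(1) \<open>finite I\<close> finite_subset by blast
  have finD: "finite D" unfolding D_def using finM M(1) assms(3) by auto
  have "card D \<le> (\<Sum>i\<in>M. card (g i))" unfolding D_def using card_UN_le[OF finM] .
  also have "\<dots> \<le> card M * s"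
    using sum_bounded_above[of M "\<lambda>i. card (g i)" s] M(1) assms(3) by auto
  also have "\<dots> \<le> k * s" using no_disjoint M by (simp add: less_imp_le_nat)
  finally have cardD: "card D \<le> k * s" .
  have "I = {i\<in>I. g i = {}} \<union> {i\<in>I. g i \<noteq> {}}" by blast
  then have "card I \<le> card {i\<in>I. g i = {}} + card {i\<in>I. g i \<noteq> {}}"
    by (metis card_Un_le)
  also have "card {i\<in>I. g i \<noteq> {}} \<le> card (\<Union>x\<in>D. {i\<in>I. x \<in> g i})"
    using hits by (intro card_mono rev_finite_subset[OF \<open>finite I\<close>]) (auto simp: D_def)
  also have "\<dots> \<le> (\<Sum>x\<in>D. card {i\<in>I. x \<in> g i})" using card_UN_le[OF finD] .
  also have "\<dots> \<le> card D * b" using sum_bounded_above[of D _ b] few by auto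
  also have "\<dots> \<le> k * s * b" using cardD by simp
  finally show False using card_empty_members_le_1[OF assms(1,2)] big by linarith
qed

text \<open>The summand 1 accounts for the one member of an injective family that may be empty.\<close>

fun sunflower_bound :: "nat \<Rightarrow> nat \<Rightarrow> nat" where
  "sunflower_bound 0 k = 1"
| "sunflower_bound (Suc s) k = 1 + k * Suc s * sunflower_bound s k"

lemma sunflower_bound_pos: "0 < sunflower_bound s k"
  by (cases s) auto

theorem sunflower_lemma:
  assumes "finite I" "inj_on g I" "\<forall>i\<in>I. finite (g i) \<and> card (g i) \<le> s"
    and "sunflower_bound s k < card I"
  shows "\<exists>J U. J \<subseteq> I \<and> card J = k \<and> sunflower g J U"
  using assms
proof (induction s arbitrary: I g)
  case 0
  then have "{i\<in>I. g i = {}} = I" by auto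
  then show ?case using card_empty_members_le_1[OF "0.prems"(1,2)] "0.prems"(4) by simp
next
  case (Suc s)
  show ?case
  proof (cases "\<exists>M\<subseteq>I. sunflower g M {} \<and> k \<le> card M")
    case True
    then obtain M where M: "M \<subseteq> I" "sunflower g M {}" "k \<le> card M" by blast
    obtain J where J: "J \<subseteq> M" "card J = k" by (rule obtain_subset_with_card_n[OF M(3)])
    have "sunflower g J {}" using sunflower_subset[OF M(2) J(1)] .
    with J M(1) show ?thesis by blast
  next
    case False
    then have no_disjoint: "\<forall>M\<subseteq>I. sunflower g M {} \<longrightarrow> card M < k" by (simp add: not_le)
    obtain x where x: "sunflower_bound s k < card {i\<in>I. x \<in> g i}"
      using element_in_many_members[OF Suc.prems(1-3) no_disjoint] Suc.prems(4)
      by (metis sunflower_bound.simps(2))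
    let ?I = "{i\<in>I. x \<in> g i}"
    have inj: "inj_on (\<lambda>i. g i - {x}) ?I"
    proof (rule inj_onI)
      fix i j assume "i \<in> ?I" "j \<in> ?I" "g i - {x} = g j - {x}"
      then have "g i = g j" by blast
      with \<open>i \<in> ?I\<close> \<open>j \<in> ?I\<close> show "i = j" using Suc.prems(2) by (auto dest: inj_onD)
    qed
    have "\<forall>i\<in>?I. finite (g i - {x}) \<and> card (g i - {x}) \<le> s"
      using Suc.prems(3) by auto
    then obtain J U where J: "J \<subseteq> ?I" "card J = k" "sunflower (\<lambda>i. g i - {x}) J U"
      using Suc.IH[OF _ inj _ x] Suc.prems(1) by auto
    then have "sunflower g J (insert x U)" by (auto simp: sunflower_def)
    with J show ?thesis by blast
  qed
qed

lemma block_avoiding_small_set: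
  assumes "finite Z" "card Z < N" "0 < K"
  shows "\<exists>q<N. {lo + q * K..<lo + q * K + K} \<inter> Z = {}"
proof -
  let ?block = "\<lambda>i. (i - lo) div K"
  have "card (?block ` Z) < card {..<N}"
    using card_image_le[OF assms(1), of ?block] assms(2) by simp
  then have "\<not> {..<N} \<subseteq> ?block ` Z"
    using card_mono[OF finite_imageI[OF assms(1)]] by (meson not_le)
  then obtain q where q: "q < N" "q \<notin> ?block ` Z" by auto
  have "?block i = q" if "i \<in> {lo + q * K..<lo + q * K + K}" for i
    using that \<open>0 < K\<close> by (auto intro!: div_nat_eqI simp: algebra_simps)
  with q show ?thesis by blast
qed

lemma positions_of_equal_value_without_smaller_between:
  fixes a :: "nat \<Rightarrow> 'b::linorder"
  assumes "finite A" "card A \<le> m" "\<forall>i\<in>{lo..<lo + L}. a i \<in> A" "N ^ m \<le> L" "0 < N"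
  shows "\<exists>J s. J \<subseteq> {lo..<lo + L} \<and> card J = N \<and> (\<forall>j\<in>J. a j = s) \<and>
    (\<forall>j\<in>J. \<forall>j'\<in>J. \<forall>p\<in>{j..j'}. s \<le> a p)"
  using assms(1-4)
proof (induction m arbitrary: A lo L)
  case 0
  then have "A = {}" "lo \<in> {lo..<lo + L}" by auto
  then show ?case using "0.prems"(3) by blast
next
  case (Suc m)
  define K where "K = N ^ m"
  have "0 < K" "N * K \<le> L" using \<open>0 < N\<close> Suc.prems(4) by (simp_all add: K_def)
  then have "0 < L" using mult_pos_pos[OF \<open>0 < N\<close> \<open>0 < K\<close>] by linarith
  then have "{lo..<lo + L} \<noteq> {}" by simp
  define s0 where "s0 = Min (a ` {lo..<lo + L})"
  have s0_min: "s0 \<le> a p" if "p \<in> {lo..<lo + L}" for p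
    using that by (simp add: s0_def)
  have "s0 \<in> a ` {lo..<lo + L}"
    using \<open>{lo..<lo + L} \<noteq> {}\<close> by (simp add: s0_def)
  then have "s0 \<in> A" using Suc.prems(3) by auto
  define Z where "Z = {i\<in>{lo..<lo + L}. a i = s0}"
  show ?case
  proof (cases "N \<le> card Z")
    case True
    then obtain J where J: "J \<subseteq> Z" "card J = N" by (rule obtain_subset_with_card_n)
    have "s0 \<le> a p" if "j \<in> J" "j' \<in> J" "p \<in> {j..j'}" for j j' p
      using J(1) that by (intro s0_min) (auto simp: Z_def)
    with J show ?thesis by (intro exI[of _ J] exI[of _ s0]) (auto simp: Z_def)
  next
    case False
    then obtain q where "q < N" and avoid: "{lo + q * K..<lo + q * K + K} \<inter> Z = {}"
      using block_avoiding_small_set[of Z N K lo] \<open>0 < K\<close> by (auto simp: Z_def)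
    have "q * K + K \<le> L"
      using \<open>q < N\<close> \<open>N * K \<le> L\<close> mult_le_mono1[of "Suc q" N K] by simp
    then have "\<forall>i\<in>{lo + q * K..<lo + q * K + K}. a i \<in> A - {s0}"
      using avoid Suc.prems(3) by (auto simp: Z_def)
    moreover have "card (A - {s0}) \<le> m" using Suc.prems(1,2) \<open>s0 \<in> A\<close> by simp
    ultimately obtain J s where "J \<subseteq> {lo + q * K..<lo + q * K + K}" "card J = N"
      "\<forall>j\<in>J. a j = s" "\<forall>j\<in>J. \<forall>j'\<in>J. \<forall>p\<in>{j..j'}. s \<le> a p"
      using Suc.IH[of "A - {s0}" "lo + q * K" K] Suc.prems(1) by (auto simp: K_def)
    moreover have "{lo + q * K..<lo + q * K + K} \<subseteq> {lo..<lo + L}"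
      using \<open>q * K + K \<le> L\<close> by auto
    ultimately show ?thesis by (intro exI[of _ J] exI[of _ s]) auto
  qed
qed

lemma sunflower_of_equal_size_in_sequence:
  fixes B :: "nat \<Rightarrow> 'a set"
  assumes inj: "inj_on B {lo..<lo + L}"
    and bounded: "\<forall>i\<in>{lo..<lo + L}. finite (B i) \<and> card (B i) \<le> c"
    and long: "(sunflower_bound c n + 1) ^ Suc c \<le> L"
  shows "\<exists>J s U. J \<subseteq> {lo..<lo + L} \<and> card J = n \<and> 0 < s \<and> (\<forall>j\<in>J. card (B j) = s) \<and>
    (\<forall>j\<in>J. \<forall>j'\<in>J. \<forall>p\<in>{j..j'}. s \<le> card (B p)) \<and> sunflower B J U"
proof -
  define N where "N = sunflower_bound c n + 1"
  have "\<forall>i\<in>{lo..<lo + L}. card (B i) \<in> {..c}" using bounded by simp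
  then obtain J0 s where J0: "J0 \<subseteq> {lo..<lo + L}" "card J0 = N" "\<forall>j\<in>J0. card (B j) = s"
      and between: "\<forall>j\<in>J0. \<forall>j'\<in>J0. \<forall>p\<in>{j..j'}. s \<le> card (B p)"
    using positions_of_equal_value_without_smaller_between[of "{..c}" "Suc c" lo L "\<lambda>i. card (B i)" N] long
    by (auto simp: N_def)
  have "finite J0" "inj_on B J0" and bounded_J0: "\<forall>i\<in>J0. finite (B i) \<and> card (B i) \<le> c"
    using J0(1) inj bounded by (auto intro: finite_subset inj_on_subset)
  have "0 < s"
  proof (rule ccontr)
    have "1 < card J0" using J0(2) sunflower_bound_pos[of c n] by (simp add: N_def)
    then obtain j j' where "j \<in> J0" "j' \<in> J0" "j \<noteq> j'"
      by (metis card_le_Suc0_iff_eq not_le One_nat_def \<open>finite J0\<close>)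
    moreover assume "\<not> 0 < s"
    ultimately have "B j = B j'"
      using J0(3) bounded_J0 by auto
    with \<open>inj_on B J0\<close> \<open>j \<in> J0\<close> \<open>j' \<in> J0\<close> \<open>j \<noteq> j'\<close> show False by (auto dest: inj_onD)
  qed
  obtain J U where "J \<subseteq> J0" "card J = n" "sunflower B J U"
    using sunflower_lemma[OF \<open>finite J0\<close> \<open>inj_on B J0\<close> bounded_J0, of n] J0(2)
    by (auto simp: N_def)
  with J0 between \<open>0 < s\<close> show ?thesis
    by (intro exI[of _ J] exI[of _ s] exI[of _ U]) blast
qed

lemma strictly_increasing_enumeration:
  fixes J :: "'a::linorder set"
  assumes "finite J" "card J = n"
  obtains idx where "\<forall>i j. 1 \<le> i \<longrightarrow> i < j \<longrightarrow> j \<le> n \<longrightarrow> idx i < idx j" "idx ` {1..n} = J"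
proof
  let ?xs = "sorted_list_of_set J"
  have len: "length ?xs = n" using assms by simp
  show "\<forall>i j. 1 \<le> i \<longrightarrow> i < j \<longrightarrow> j \<le> n \<longrightarrow> ?xs ! (i - 1) < ?xs ! (j - 1)"
    using strict_sorted_list_of_set[of J] len by (auto intro: sorted_wrt_nth_less)
  have "set ?xs = J" using assms(1) by simp
  show "(\<lambda>i. ?xs ! (i - 1)) ` {1..n} = J"
  proof
    have "?xs ! (i - 1) \<in> set ?xs" if "i \<in> {1..n}" for i
      using that len by (intro nth_mem) auto
    then show "(\<lambda>i. ?xs ! (i - 1)) ` {1..n} \<subseteq> J"
      using \<open>set ?xs = J\<close> by blast
    show "J \<subseteq> (\<lambda>i. ?xs ! (i - 1)) ` {1..n}"
    proof
      fix x assume "x \<in> J"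
      then obtain k where "k < n" "x = ?xs ! k"
        using \<open>set ?xs = J\<close> len by (metis in_set_conv_nth)
      then show "x \<in> (\<lambda>i. ?xs ! (i - 1)) ` {1..n}"
        by (intro image_eqI[of _ _ "Suc k"]) auto
    qed
  qed
qed

lemma bag_subset_finite:
  assumes "multigraph V E ends" "tree_decomp V E ends VT ET Y" "t \<in> VT"
  shows "Y t \<subseteq> V" "finite (Y t)"
  using assms by (auto simp: multigraph_def tree_decomp_def intro: finite_subset)

lemma lean_bags_inj_along_path:
  assumes "lean_tree_decomp V E ends VT ET Y" "is_path ET VT P"
  shows "inj_on (\<lambda>i. Y (P ! i)) {..<length P}"
proof (rule inj_onI)
  fix i j assume "i \<in> {..<length P}" "j \<in> {..<length P}" "Y (P ! i) = Y (P ! j)"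
  moreover have "distinct P" "set P \<subseteq> VT" using assms(2) by (auto simp: is_path_def)
  ultimately have "P ! i = P ! j"
    using assms(1) unfolding lean_tree_decomp_def by (metis lessThan_iff nth_mem subsetD)
  with \<open>distinct P\<close> \<open>i \<in> {..<length P}\<close> \<open>j \<in> {..<length P}\<close> show "i = j"
    by (simp add: nth_eq_iff_index_eq)
qed

lemma lean_path_interior_sunflower:
  fixes P :: "'t list" and Y :: "'t \<Rightarrow> 'v set"
  assumes "0 < n" and mg: "multigraph V E ends" and lean: "lean_tree_decomp V E ends VT ET Y"
    and width: "\<forall>t\<in>VT. card (Y t) \<le> w + 1" and path: "is_path ET VT P"
    and long: "(sunflower_bound (w + 1) n + 1) ^ (w + 2) + 2 \<le> length P - 1"
  shows "\<exists>idx :: nat \<Rightarrow> nat.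
       (\<forall>i j. 1 \<le> i \<longrightarrow> i < j \<longrightarrow> j \<le> n \<longrightarrow> idx i < idx j) \<and>
       0 < idx 1 \<and> idx n < length P - 1 \<and>
       (\<exists>s::nat. 0 < s \<and> s \<le> w + 1 \<and>
          (\<forall>i\<in>{1..n}. card (Y (P ! idx i)) = s) \<and>
          (\<forall>k. idx 1 \<le> k \<longrightarrow> k \<le> idx n \<longrightarrow> s \<le> card (Y (P ! k)))) \<and>
       (\<exists>U. U \<subseteq> V \<and>
          (\<forall>i\<in>{1..n}. \<forall>j\<in>{1..n}. i \<noteq> j \<longrightarrow> Y (P ! idx i) \<inter> Y (P ! idx j) = U))"
proof -
  let ?B = "\<lambda>i. Y (P ! i)" and ?I = "{1..<1 + (length P - 2)}"
  have td: "tree_decomp V E ends VT ET Y" using lean by (simp add: lean_tree_decomp_def)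
  have "P ! i \<in> VT" if "i \<in> ?I" for i
    using that path by (auto simp: is_path_def)
  then have bags: "\<forall>i\<in>?I. ?B i \<subseteq> V \<and> finite (?B i) \<and> card (?B i) \<le> w + 1"
    using bag_subset_finite[OF mg td] width by blast
  have inj: "inj_on ?B ?I"
    using lean_bags_inj_along_path[OF lean path] by (rule inj_on_subset) auto
  have bounded: "\<forall>i\<in>?I. finite (?B i) \<and> card (?B i) \<le> w + 1" using bags by blast
  have long: "(sunflower_bound (w + 1) n + 1) ^ Suc (w + 1) \<le> length P - 2"
    using long unfolding Suc_eq_plus1 add.assoc one_add_one by linarith
  obtain J s U where J: "J \<subseteq> ?I" "card J = n" "0 < s" "\<forall>j\<in>J. card (?B j) = s"
      "\<forall>j\<in>J. \<forall>j'\<in>J. \<forall>p\<in>{j..j'}. s \<le> card (?B p)" "sunflower ?B J U"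
    using sunflower_of_equal_size_in_sequence[OF inj bounded long] by blast
  obtain idx where idx: "\<forall>i j. 1 \<le> i \<longrightarrow> i < j \<longrightarrow> j \<le> n \<longrightarrow> idx i < idx j"
      "idx ` {1..n} = J"
    using strictly_increasing_enumeration[of J n] J(1,2) finite_subset by blast
  then have ends_in_J: "idx 1 \<in> J" "idx n \<in> J" using \<open>0 < n\<close> by auto
  have distinct: "idx i \<noteq> idx j" if "i \<in> {1..n}" "j \<in> {1..n}" "i \<noteq> j" for i j
    using idx(1) that by (metis atLeastAtMost_iff less_irrefl nat_neq_iff)
  show ?thesis
  proof (intro exI[of _ idx] exI[of _ s] exI[of _ "U \<inter> V"] conjI allI impI ballI)
    have "idx 1 \<in> ?I" "idx n \<in> ?I" using ends_in_J J(1) by auto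
    then show "0 < idx 1" "idx n < length P - 1" by auto
    show "s \<le> w + 1" using ends_in_J J(4) bags J(1) by fastforce
    show "card (Y (P ! idx i)) = s" if "i \<in> {1..n}" for i using that idx(2) J(4) by blast
    show "s \<le> card (Y (P ! k))" if "idx 1 \<le> k" "k \<le> idx n" for k
      using that ends_in_J J(5) by auto
    show "Y (P ! idx i) \<inter> Y (P ! idx j) = U \<inter> V"
      if "i \<in> {1..n}" "j \<in> {1..n}" "i \<noteq> j" for i j
      using distinct[OF that] that idx(2) J(1,6) bags unfolding sunflower_def by blast
  qed (use idx(1) J(3) in auto)
qed

theorem lemma5p4:
  shows "\<exists>f :: nat \<Rightarrow> nat \<Rightarrow> nat. \<forall>(n::nat) (w::nat).
    \<forall>(V::nat set) (E::nat set) (ends::nat \<Rightarrow> nat set)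
     (VT::nat set) (ET::nat \<Rightarrow> nat \<Rightarrow> bool) (Y::nat \<Rightarrow> nat set) (P::nat list).
    0 < n \<longrightarrow> 0 < w \<longrightarrow>
    multigraph V E ends \<longrightarrow> V \<noteq> {} \<longrightarrow> connected_on (mg_adj E ends) V \<longrightarrow>
    lean_tree_decomp V E ends VT ET Y \<longrightarrow>
    (\<forall>t\<in>VT. card (Y t) \<le> w + 1) \<longrightarrow>
    is_path ET VT P \<longrightarrow> f n w \<le> length P - 1 \<longrightarrow>
    (\<exists>idx :: nat \<Rightarrow> nat.
       (\<forall>i j. 1 \<le> i \<longrightarrow> i < j \<longrightarrow> j \<le> n \<longrightarrow> idx i < idx j) \<and>
       0 < idx 1 \<and> idx n < length P - 1 \<and>
       (\<exists>s::nat. 0 < s \<and> s \<le> w + 1 \<and>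
          (\<forall>i\<in>{1..n}. card (Y (P ! idx i)) = s) \<and>
          (\<forall>k. idx 1 \<le> k \<longrightarrow> k \<le> idx n \<longrightarrow> s \<le> card (Y (P ! k)))) \<and>
       (\<exists>U. U \<subseteq> V \<and>
          (\<forall>i\<in>{1..n}. \<forall>j\<in>{1..n}. i \<noteq> j \<longrightarrow> Y (P ! idx i) \<inter> Y (P ! idx j) = U)))"
  by (intro exI[of _ "\<lambda>n w. (sunflower_bound (w + 1) n + 1) ^ (w + 2) + 2"] allI impI
      lean_path_interior_sunflower)

end
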